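(* Let $C$ and $C'$ be Clifford systems on $\mathbb{R}^{2l}$ and $\mathbb{R}^{2l'}$ respectively, each satisfying ($l>m+1$ or $l=m\ge2$) for its own rank. If $C$ and $C'$ are not geometrically equivalent, then there is no isometry $\mathbb{S}^{2l-1}\to\mathbb{S}^{2l'-1}$ mapping the leaves of $\mathcal{F}_C$ onto the leaves of $\mathcal{F}_{C'}$.
   Context: A Clifford system $C$ of rank $m+1$ ($m\ge1$) on $\mathbb{R}^{2l}$, with the standard inner product, is an $(m+1)$-dimensional linear subspace $\mathbb{R}_C$ of the symmetric endomorphisms of $\mathbb{R}^{2l}$. It must admit a basis $P_0,\dots,P_m$ with $P_i^2=\mathrm{Id}$ and $P_iP_j=-P_jP_i$ for $i\ne j$. The map $\pi_C$ is $\pi_C(x)=\sum_i\langle P_ix,x\rangle P_i$ on $\mathbb{S}^{2l-1}$, and $\mathcal{F}_C$ is the partition of $\mathbb{S}^{2l-1}$ into fibers of $\pi_C$. Clifford systems $C,C'$ on the same $\mathbb{R}^{2l}$ are geometrically equivalent if $\mathbb{R}_{C'}=A^{-1}\mathbb{R}_CA$ for some $A\in O(2l)$; systems on spaces of different dimensions are never geometrically equivalent. *)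

theory Defs
  imports "Jordan_Normal_Form.Matrix"
begin

text \<open>Real Euclidean space R^n is modelled by carrier_vec n, endomorphisms by n x n
  real matrices (carrier_mat n n), the standard inner product by the scalar product.\<close>

definition orth_mat :: "nat \<Rightarrow> real mat \<Rightarrow> bool" where
  "orth_mat n A \<longleftrightarrow> A \<in> carrier_mat n n \<and> transpose_mat A * A = 1\<^sub>m n"

definition sym_mat :: "nat \<Rightarrow> real mat \<Rightarrow> bool" where
  "sym_mat n P \<longleftrightarrow> P \<in> carrier_mat n n \<and> transpose_mat P = P"

definition lin_comb :: "nat \<Rightarrow> real mat list \<Rightarrow> (nat \<Rightarrow> real) \<Rightarrow> real mat" where
  "lin_comb n Ps c = mat n n (\<lambda>(i,j). \<Sum>k<length Ps. c k * (Ps ! k) $$ (i,j))"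

definition mat_span :: "nat \<Rightarrow> real mat list \<Rightarrow> real mat set" where
  "mat_span n Ps = range (lin_comb n Ps)"

text \<open>A Clifford system of rank m+1 = length Ps on R^(2l), given by its basis
  P_0,...,P_m of symmetric matrices with P_i^2 = Id and P_i P_j = - P_j P_i (i \<noteq> j);
  m \<ge> 1. The underlying subspace R_C is mat_span (2*l) Ps.\<close>
definition clifford_system :: "nat \<Rightarrow> real mat list \<Rightarrow> bool" where
  "clifford_system l Ps \<longleftrightarrow>
     length Ps \<ge> 2 \<and>
     (\<forall>i < length Ps. sym_mat (2*l) (Ps ! i) \<and> Ps ! i * Ps ! i = 1\<^sub>m (2*l)) \<and>
     (\<forall>i < length Ps. \<forall>j < length Ps. i \<noteq> j \<longrightarrow> Ps ! i * Ps ! j = - (Ps ! j * Ps ! i))"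

definition cs_m :: "real mat list \<Rightarrow> nat" where
  "cs_m Ps = length Ps - 1"

definition unit_sphere :: "nat \<Rightarrow> real vec set" where
  "unit_sphere n = {x \<in> carrier_vec n. x \<bullet> x = 1}"

definition vdist :: "real vec \<Rightarrow> real vec \<Rightarrow> real" where
  "vdist x y = sqrt ((x - y) \<bullet> (x - y))"

definition pi_C :: "nat \<Rightarrow> real mat list \<Rightarrow> real vec \<Rightarrow> real mat" where
  "pi_C l Ps x = lin_comb (2*l) Ps (\<lambda>i. ((Ps ! i) *\<^sub>v x) \<bullet> x)"

definition leaves :: "nat \<Rightarrow> real mat list \<Rightarrow> real vec set set" where
  "leaves l Ps = {{y \<in> unit_sphere (2*l). pi_C l Ps y = pi_C l Ps x} | x. x \<in> unit_sphere (2*l)}"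

text \<open>Geometric equivalence: same ambient space and R_C' = A^{-1} R_C A for some
  A in O(2l) (A^{-1} = A^T for orthogonal A).\<close>
definition geom_equiv :: "nat \<Rightarrow> real mat list \<Rightarrow> nat \<Rightarrow> real mat list \<Rightarrow> bool" where
  "geom_equiv l Ps l' Qs \<longleftrightarrow> l = l' \<and>
     (\<exists>A. orth_mat (2*l) A \<and>
          mat_span (2*l) Qs = (\<lambda>P. transpose_mat A * P * A) ` mat_span (2*l) Ps)"

text \<open>Isometry between unit spheres (w.r.t. the Euclidean/chordal distance, which
  determines the round metric).\<close>
definition sphere_isometry :: "nat \<Rightarrow> nat \<Rightarrow> (real vec \<Rightarrow> real vec) \<Rightarrow> bool" where
  "sphere_isometry n n' f \<longleftrightarrow> bij_betw f (unit_sphere n) (unit_sphere n') \<and>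
     (\<forall>x \<in> unit_sphere n. \<forall>y \<in> unit_sphere n. vdist (f x) (f y) = vdist x y)"

end

theory Submission
  imports Defs "Jordan_Normal_Form.Determinant"
begin

text \<open>An isometry between unit spheres is the restriction of an orthogonal matrix \<open>B\<close>, so
  \<open>l = l'\<close>. For a unit coefficient vector \<open>a\<close>, the element \<open>L a = \<Sum>i. a i P_i\<close> of \<open>R_C\<close> is a
  symmetric involution whose fixed points on the sphere form a leaf of \<open>F_C\<close>, a focal leaf.
  Among all leaves, the focal ones are exactly those closed under normalised sums
  \<open>(x + y) / |x + y|\<close>, a property preserved by \<open>B\<close>. So \<open>B\<close> matches focal leaves with focal
  leaves, and since a symmetric involution is determined by its fixed points, conjugation by \<open>B\<close>
  maps the unit elements of \<open>R_C\<close> onto those of \<open>R_C'\<close>. These span the two spaces, hence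
  \<open>R_C' = B R_C B\<^sup>T\<close>.\<close>

lemma scalar_prod_self_nonneg: "0 \<le> (v::real vec) \<bullet> v"
  using conjugate_square_ge_0_vec[of v] by simp

lemma scalar_prod_self_eq_0_iff:
  "(v::real vec) \<in> carrier_vec n \<Longrightarrow> v \<bullet> v = 0 \<longleftrightarrow> v = 0\<^sub>v n"
  using conjugate_square_eq_0_vec[of v n] by simp

lemma eq_vec_if_diff_eq_0:
  assumes "(v::real vec) \<in> carrier_vec n" "w \<in> carrier_vec n" "v - w = 0\<^sub>v n"
  shows "v = w"
proof (rule eq_vecI)
  fix i assume i: "i < dim_vec w"
  hence "(v - w) $ i = 0" using assms by simp
  thus "v $ i = w $ i" using i assms(1,2) by simp
qed (use assms in simp)

lemma eq_vec_if_scalar_prod_eq: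
  assumes v: "(v::real vec) \<in> carrier_vec n" and w: "w \<in> carrier_vec n"
    and eq: "\<And>z. z \<in> carrier_vec n \<Longrightarrow> v \<bullet> z = w \<bullet> z"
  shows "v = w"
proof -
  have d: "v - w \<in> carrier_vec n" using v w by simp
  have "(v - w) \<bullet> (v - w) = v \<bullet> (v - w) - w \<bullet> (v - w)"
    by (rule minus_scalar_prod_distrib[OF v w d])
  also have "\<dots> = 0" using eq[OF d] by simp
  finally show ?thesis
    using scalar_prod_self_eq_0_iff[OF d] eq_vec_if_diff_eq_0[OF v w] by simp
qed

lemma eq_mat_if_mult_vec_eq:
  assumes A: "(A::real mat) \<in> carrier_mat n n" and B: "B \<in> carrier_mat n n"
    and eq: "\<And>x. x \<in> carrier_vec n \<Longrightarrow> A *\<^sub>v x = B *\<^sub>v x"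
  shows "A = B"
proof (rule eq_matI)
  fix i j assume ij: "i < dim_row B" "j < dim_col B"
  have "(A *\<^sub>v unit_vec n j) $ i = (B *\<^sub>v unit_vec n j) $ i" using eq by simp
  thus "A $$ (i, j) = B $$ (i, j)" using A B ij by simp
qed (use A B in auto)

lemma scalar_prod_diff_self:
  assumes x: "(x::real vec) \<in> carrier_vec n" and y: "y \<in> carrier_vec n"
  shows "(x - y) \<bullet> (x - y) = x \<bullet> x - 2 * (x \<bullet> y) + y \<bullet> y"
  using x y comm_scalar_prod[OF x y]
  by (simp add: minus_scalar_prod_distrib scalar_prod_minus_distrib)

lemma scalar_prod_add_self:
  assumes x: "(x::real vec) \<in> carrier_vec n" and y: "y \<in> carrier_vec n"
  shows "(x + y) \<bullet> (x + y) = x \<bullet> x + 2 * (x \<bullet> y) + y \<bullet> y"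
  using x y comm_scalar_prod[OF x y]
  by (simp add: add_scalar_prod_distrib scalar_prod_add_distrib)

lemma sum_flip_signs:
  fixes a c :: "nat \<Rightarrow> real"
  assumes "j < k"
  shows "(\<Sum>i<k. a i * (if i = j then c i else - c i)) = 2 * (a j * c j) - (\<Sum>i<k. a i * c i)"
proof -
  have "(\<Sum>i<k. a i * (if i = j then c i else - c i))
      = (\<Sum>i<k. (if i = j then 2 * (a i * c i) else 0) - a i * c i)"
    by (intro sum.cong) auto
  also have "\<dots> = 2 * (a j * c j) - (\<Sum>i<k. a i * c i)"
    using assms by (simp add: sum_subtractf)
  finally show ?thesis .
qed

definition normalize_vec :: "real vec \<Rightarrow> real vec" where
  "normalize_vec u = (1 / sqrt (u \<bullet> u)) \<cdot>\<^sub>v u"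

lemma normalize_vec_in_unit_sphere:
  assumes u: "u \<in> carrier_vec n" and nz: "u \<noteq> 0\<^sub>v n"
  shows "normalize_vec u \<in> unit_sphere n"
proof -
  have pos: "u \<bullet> u > 0"
    using scalar_prod_self_eq_0_iff[OF u] scalar_prod_self_nonneg[of u] nz by linarith
  have "normalize_vec u \<bullet> normalize_vec u = (1 / sqrt (u \<bullet> u)) * ((1 / sqrt (u \<bullet> u)) * (u \<bullet> u))"
    unfolding normalize_vec_def using u by simp
  also have "\<dots> = 1" using pos by (simp add: field_simps)
  finally show ?thesis unfolding unit_sphere_def normalize_vec_def using u by simp
qed

lemma mult_normalize_vec_fixed:
  assumes "(A::real mat) \<in> carrier_mat n n" "u \<in> carrier_vec n" "A *\<^sub>v u = u"
  shows "A *\<^sub>v normalize_vec u = normalize_vec u"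
  unfolding normalize_vec_def using mult_mat_vec[OF assms(1,2)] assms(3) by simp

lemma normalize_vec_cancel_fixed:
  assumes A: "(A::real mat) \<in> carrier_mat n n" and u: "u \<in> carrier_vec n" and nz: "u \<noteq> 0\<^sub>v n"
    and fixed: "A *\<^sub>v normalize_vec u = normalize_vec u"
  shows "A *\<^sub>v u = u"
proof -
  define c where "c = 1 / sqrt (u \<bullet> u)"
  have "c \<noteq> 0"
    using scalar_prod_self_eq_0_iff[OF u] scalar_prod_self_nonneg[of u] nz unfolding c_def by simp
  moreover have "c \<cdot>\<^sub>v (A *\<^sub>v u) = c \<cdot>\<^sub>v u"
    using fixed mult_mat_vec[OF A u] unfolding normalize_vec_def c_def by simp
  hence "(1/c) \<cdot>\<^sub>v (c \<cdot>\<^sub>v (A *\<^sub>v u)) = (1/c) \<cdot>\<^sub>v (c \<cdot>\<^sub>v u)" by simp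
  ultimately show ?thesis by (simp add: smult_smult_assoc)
qed

definition closed_under_normalized_sums :: "nat \<Rightarrow> real vec set \<Rightarrow> bool" where
  "closed_under_normalized_sums n S \<longleftrightarrow>
     (\<forall>x\<in>S. \<forall>y\<in>S. x + y \<noteq> 0\<^sub>v n \<longrightarrow> normalize_vec (x + y) \<in> S)"

lemma orth_mat_carrier: "orth_mat n B \<Longrightarrow> B \<in> carrier_mat n n"
  unfolding orth_mat_def by simp

lemma orth_mat_mult_transpose: "orth_mat n B \<Longrightarrow> B * transpose_mat B = 1\<^sub>m n"
  unfolding orth_mat_def using mat_mult_left_right_inverse[of "transpose_mat B" n B] by auto

lemma orth_mat_transpose: "orth_mat n B \<Longrightarrow> orth_mat n (transpose_mat B)"
  using orth_mat_mult_transpose[of n B] unfolding orth_mat_def by simp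

lemma orth_mat_transpose_mult_vec:
  assumes B: "orth_mat n B" and y: "y \<in> carrier_vec n"
  shows "transpose_mat B *\<^sub>v (B *\<^sub>v y) = y"
proof -
  have "transpose_mat B *\<^sub>v (B *\<^sub>v y) = (transpose_mat B * B) *\<^sub>v y"
    using B y unfolding orth_mat_def by (subst assoc_mult_mat_vec) auto
  thus ?thesis using B y unfolding orth_mat_def by simp
qed

lemma orth_mat_mult_transpose_vec:
  "orth_mat n B \<Longrightarrow> y \<in> carrier_vec n \<Longrightarrow> B *\<^sub>v (transpose_mat B *\<^sub>v y) = y"
  using orth_mat_transpose_mult_vec[OF orth_mat_transpose] by simp

lemma orth_mat_scalar_prod:
  assumes B: "orth_mat n B" and x: "x \<in> carrier_vec n" and y: "y \<in> carrier_vec n"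
  shows "(B *\<^sub>v x) \<bullet> (B *\<^sub>v y) = x \<bullet> y"
proof -
  have Bc: "B \<in> carrier_mat n n" using orth_mat_carrier[OF B] .
  have "(B *\<^sub>v x) \<bullet> (B *\<^sub>v y) = (transpose_mat B *\<^sub>v (B *\<^sub>v y)) \<bullet> x"
    using transpose_vec_mult_scalar[OF Bc x, of "B *\<^sub>v y"] comm_scalar_prod[of "B *\<^sub>v x" n]
      Bc x y by simp
  thus ?thesis using orth_mat_transpose_mult_vec[OF B y] comm_scalar_prod[OF x y] by simp
qed

lemma orth_mat_unit_sphere: "orth_mat n B \<Longrightarrow> x \<in> unit_sphere n \<Longrightarrow> B *\<^sub>v x \<in> unit_sphere n"
  using orth_mat_scalar_prod[of n B x x] orth_mat_carrier[of n B] unfolding unit_sphere_def by auto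

lemma orth_mat_normalize_vec:
  "orth_mat n B \<Longrightarrow> x \<in> carrier_vec n \<Longrightarrow> normalize_vec (B *\<^sub>v x) = B *\<^sub>v normalize_vec x"
  unfolding normalize_vec_def
  using orth_mat_scalar_prod[of n B x x] mult_mat_vec[OF orth_mat_carrier] by simp

lemma orth_conj_cancel:
  assumes B: "orth_mat n B" and X: "X \<in> carrier_mat n n"
  shows "B * (transpose_mat B * X * B) * transpose_mat B = X"
proof -
  have Bc: "B \<in> carrier_mat n n" using orth_mat_carrier[OF B] .
  have "B * (transpose_mat B * X * B) * transpose_mat B
      = (B * transpose_mat B) * X * (B * transpose_mat B)"
    using Bc X by (simp add: assoc_mult_mat[of _ n n _ n _ n])
  thus ?thesis using orth_mat_mult_transpose[OF B] X by simp
qed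

lemma smult_orth_conj:
  assumes "(B::real mat) \<in> carrier_mat n n" "X \<in> carrier_mat n n"
  shows "r \<cdot>\<^sub>m (B * X * transpose_mat B) = B * (r \<cdot>\<^sub>m X) * transpose_mat B"
  using assms mult_smult_distrib[of B n n X n r] mult_smult_assoc_mat[of "B * X" n n "transpose_mat B" n]
  by simp

lemma closed_under_normalized_sums_orth_preimage:
  assumes B: "orth_mat n B" and S: "S \<subseteq> carrier_vec n"
    and closed: "closed_under_normalized_sums n ((\<lambda>x. B *\<^sub>v x) ` S)"
  shows "closed_under_normalized_sums n S"
  unfolding closed_under_normalized_sums_def
proof (intro ballI impI)
  fix y z assume yz: "y \<in> S" "z \<in> S" "y + z \<noteq> 0\<^sub>v n"
  have c: "y \<in> carrier_vec n" "z \<in> carrier_vec n" using yz S by auto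
  have Bc: "B \<in> carrier_mat n n" using orth_mat_carrier[OF B] .
  have sum: "B *\<^sub>v y + B *\<^sub>v z = B *\<^sub>v (y + z)" using mult_add_distrib_mat_vec[OF Bc c] by simp
  have "B *\<^sub>v y + B *\<^sub>v z \<noteq> 0\<^sub>v n"
  proof
    assume "B *\<^sub>v y + B *\<^sub>v z = 0\<^sub>v n"
    hence "transpose_mat B *\<^sub>v (B *\<^sub>v (y + z)) = 0\<^sub>v n" using Bc sum by auto
    thus False using orth_mat_transpose_mult_vec[OF B, of "y + z"] c yz(3) by simp
  qed
  hence "normalize_vec (B *\<^sub>v y + B *\<^sub>v z) \<in> (\<lambda>x. B *\<^sub>v x) ` S"
    using closed yz(1,2) unfolding closed_under_normalized_sums_def by blast
  then obtain x where x: "x \<in> S" "B *\<^sub>v normalize_vec (y + z) = B *\<^sub>v x"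
    using orth_mat_normalize_vec[OF B, of "y + z"] sum c by auto
  have "normalize_vec (y + z) \<in> carrier_vec n" using c unfolding normalize_vec_def by simp
  hence "normalize_vec (y + z) = x"
    using arg_cong[OF x(2), of "\<lambda>v. transpose_mat B *\<^sub>v v"] orth_mat_transpose_mult_vec[OF B] x S
    by (metis subsetD)
  thus "normalize_vec (y + z) \<in> S" using x(1) by simp
qed

section \<open>Fixed spheres and symmetric involutions\<close>

definition fixed_sphere :: "nat \<Rightarrow> real mat \<Rightarrow> real vec set" where
  "fixed_sphere n M = {y \<in> unit_sphere n. M *\<^sub>v y = y}"

lemma fixed_sphere_orth_conj:
  assumes B: "orth_mat n B" and M: "M \<in> carrier_mat n n"
  shows "fixed_sphere n (B * M * transpose_mat B) = (\<lambda>x. B *\<^sub>v x) ` fixed_sphere n M"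
proof -
  have Bc: "B \<in> carrier_mat n n" using orth_mat_carrier[OF B] .
  have conj: "(B * M * transpose_mat B) *\<^sub>v y = B *\<^sub>v (M *\<^sub>v (transpose_mat B *\<^sub>v y))"
    if "y \<in> carrier_vec n" for y
    using that Bc M by (simp add: assoc_mult_mat_vec[of _ n n _ n])
  show ?thesis
  proof (intro equalityI subsetI)
    fix y assume "y \<in> fixed_sphere n (B * M * transpose_mat B)"
    hence y: "y \<in> unit_sphere n" "y \<in> carrier_vec n" "(B * M * transpose_mat B) *\<^sub>v y = y"
      unfolding fixed_sphere_def unit_sphere_def by auto
    let ?x = "transpose_mat B *\<^sub>v y"
    have "M *\<^sub>v ?x = transpose_mat B *\<^sub>v ((B * M * transpose_mat B) *\<^sub>v y)"
      using conj[OF y(2)] orth_mat_transpose_mult_vec[OF B] M Bc y(2) by simp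
    hence "?x \<in> fixed_sphere n M"
      using y orth_mat_unit_sphere[OF orth_mat_transpose[OF B]] unfolding fixed_sphere_def by simp
    moreover have "y = B *\<^sub>v ?x" using orth_mat_mult_transpose_vec[OF B y(2)] by simp
    ultimately show "y \<in> (\<lambda>x. B *\<^sub>v x) ` fixed_sphere n M" by blast
  next
    fix y assume "y \<in> (\<lambda>x. B *\<^sub>v x) ` fixed_sphere n M"
    then obtain x where x: "x \<in> unit_sphere n" "M *\<^sub>v x = x" and y: "y = B *\<^sub>v x"
      unfolding fixed_sphere_def by blast
    have xc: "x \<in> carrier_vec n" using x(1) unfolding unit_sphere_def by simp
    have "(B * M * transpose_mat B) *\<^sub>v y = y"
      using conj[of y] y x(2) xc Bc orth_mat_transpose_mult_vec[OF B xc] by simp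
    thus "y \<in> fixed_sphere n (B * M * transpose_mat B)"
      using orth_mat_unit_sphere[OF B x(1)] y unfolding fixed_sphere_def by simp
  qed
qed

lemma closed_under_normalized_sums_fixed_sphere:
  assumes M: "(M::real mat) \<in> carrier_mat n n"
  shows "closed_under_normalized_sums n (fixed_sphere n M)"
  unfolding closed_under_normalized_sums_def
proof (intro ballI impI)
  fix y z assume yz: "y \<in> fixed_sphere n M" "z \<in> fixed_sphere n M" "y + z \<noteq> 0\<^sub>v n"
  have c: "y \<in> carrier_vec n" "z \<in> carrier_vec n"
    using yz unfolding fixed_sphere_def unit_sphere_def by auto
  have "M *\<^sub>v (y + z) = y + z"
    using mult_add_distrib_mat_vec[OF M c] yz unfolding fixed_sphere_def by simp
  thus "normalize_vec (y + z) \<in> fixed_sphere n M" unfolding fixed_sphere_def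
    using normalize_vec_in_unit_sphere[OF _ yz(3)] mult_normalize_vec_fixed[OF M] c by auto
qed

definition sym_involution :: "nat \<Rightarrow> real mat \<Rightarrow> bool" where
  "sym_involution n M \<longleftrightarrow> sym_mat n M \<and> M * M = 1\<^sub>m n"

lemma sym_involution_carrier: "sym_involution n M \<Longrightarrow> M \<in> carrier_mat n n"
  unfolding sym_involution_def sym_mat_def by simp

lemma sym_involution_scalar_prod:
  assumes "sym_involution n M" "x \<in> carrier_vec n" "y \<in> carrier_vec n"
  shows "(M *\<^sub>v x) \<bullet> y = x \<bullet> (M *\<^sub>v y)"
  using transpose_vec_mult_scalar[of M n n y x] assms
  unfolding sym_involution_def sym_mat_def by (simp add: comm_scalar_prod[of _ n])

lemma sym_involution_mult_vec_twice:
  assumes "sym_involution n M" "x \<in> carrier_vec n"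
  shows "M *\<^sub>v (M *\<^sub>v x) = x"
  using assms assoc_mult_mat_vec[of M n n M n x, symmetric]
  unfolding sym_involution_def sym_mat_def by simp

lemma sym_involution_orth_conj:
  assumes B: "orth_mat n B" and M: "sym_involution n M"
  shows "sym_involution n (B * M * transpose_mat B)"
proof -
  have Bc: "B \<in> carrier_mat n n" using orth_mat_carrier[OF B] .
  have Mc: "M \<in> carrier_mat n n" using sym_involution_carrier[OF M] .
  have "transpose_mat (B * M * transpose_mat B) = B * transpose_mat M * transpose_mat B"
    using Bc Mc transpose_mult[of "B * M" n n "transpose_mat B" n] transpose_mult[of B n n M n]
    by (simp add: assoc_mult_mat[of _ n n _ n _ n])
  hence sym: "sym_mat n (B * M * transpose_mat B)"
    using M Bc Mc unfolding sym_involution_def sym_mat_def by simp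
  have "B * M * transpose_mat B * (B * M * transpose_mat B)
      = B * M * (transpose_mat B * B) * M * transpose_mat B"
    using Bc Mc by (simp add: assoc_mult_mat[of _ n n _ n _ n])
  also have "\<dots> = B * (M * M) * transpose_mat B"
    using B Bc Mc unfolding orth_mat_def by (simp add: assoc_mult_mat[of _ n n _ n _ n])
  also have "\<dots> = 1\<^sub>m n"
    using M orth_mat_mult_transpose[OF B] Bc unfolding sym_involution_def by simp
  finally show ?thesis using sym unfolding sym_involution_def by simp
qed

text \<open>The fixed points of a matrix form a linear subspace, the cone over its fixed sphere.\<close>
lemma fixes_eq_if_fixed_sphere_eq:
  assumes M: "(M::real mat) \<in> carrier_mat n n" and M': "M' \<in> carrier_mat n n"
    and eq: "fixed_sphere n M = fixed_sphere n M'" and z: "z \<in> carrier_vec n"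
  shows "M *\<^sub>v z = z \<longleftrightarrow> M' *\<^sub>v z = z"
proof (cases "z = 0\<^sub>v n")
  case True
  thus ?thesis using M M' by auto
next
  case False
  have "normalize_vec z \<in> unit_sphere n" using normalize_vec_in_unit_sphere[OF z False] .
  hence "M *\<^sub>v normalize_vec z = normalize_vec z \<longleftrightarrow> M' *\<^sub>v normalize_vec z = normalize_vec z"
    using eq unfolding fixed_sphere_def by blast
  thus ?thesis using mult_normalize_vec_fixed normalize_vec_cancel_fixed M M' z False by metis
qed

text \<open>\<open>M'\<close> negates every \<open>w = x - M x\<close>: the vector \<open>v = w + M' w\<close> is fixed by \<open>M'\<close>, hence by
  \<open>M\<close>, hence orthogonal to \<open>w\<close>, and then \<open>v \<bullet> v = 2 (v \<bullet> w) = 0\<close>.\<close>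
lemma sym_involution_eq_if_fixes_eq:
  assumes M: "sym_involution n M" and M': "sym_involution n M'"
    and same_fixes: "\<And>z. z \<in> carrier_vec n \<Longrightarrow> M *\<^sub>v z = z \<longleftrightarrow> M' *\<^sub>v z = z"
  shows "M = M'"
proof (rule eq_mat_if_mult_vec_eq[OF sym_involution_carrier[OF M] sym_involution_carrier[OF M']])
  fix x :: "real vec" assume x: "x \<in> carrier_vec n"
  have Mc: "M \<in> carrier_mat n n" and M'c: "M' \<in> carrier_mat n n"
    using M M' by (auto simp: sym_involution_carrier)
  have Mx: "M *\<^sub>v x \<in> carrier_vec n" using Mc x by simp
  let ?u = "x + M *\<^sub>v x" and ?w = "x - M *\<^sub>v x"
  have wc: "?w \<in> carrier_vec n" using x Mx by simp
  have "M *\<^sub>v ?u = M *\<^sub>v x + x"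
    using mult_add_distrib_mat_vec[OF Mc x Mx] sym_involution_mult_vec_twice[OF M x] by simp
  hence "M' *\<^sub>v ?u = ?u" using same_fixes[of ?u] comm_add_vec[OF Mx x] x Mx by simp
  hence M'u: "M' *\<^sub>v x + M' *\<^sub>v (M *\<^sub>v x) = x + M *\<^sub>v x"
    using mult_add_distrib_mat_vec[OF M'c x Mx] by simp
  have Mw: "M *\<^sub>v ?w = M *\<^sub>v x - x"
    using mult_minus_distrib_mat_vec[OF Mc x Mx] sym_involution_mult_vec_twice[OF M x] by simp
  have M'wc: "M' *\<^sub>v ?w \<in> carrier_vec n" using M'c wc by simp
  let ?v = "?w + M' *\<^sub>v ?w"
  have vc: "?v \<in> carrier_vec n" using wc M'wc by simp
  have "M' *\<^sub>v ?v = M' *\<^sub>v ?w + ?w"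
    using mult_add_distrib_mat_vec[OF M'c wc M'wc] sym_involution_mult_vec_twice[OF M' wc] by simp
  hence "M *\<^sub>v ?v = ?v" using same_fixes[OF vc] comm_add_vec[OF M'wc wc] by simp
  hence "?v \<bullet> ?w = ?v \<bullet> (M *\<^sub>v ?w)" using sym_involution_scalar_prod[OF M vc wc] by simp
  also have "\<dots> = - (?v \<bullet> ?w)"
    using Mw scalar_prod_minus_distrib[OF vc Mx x] scalar_prod_minus_distrib[OF vc x Mx] by simp
  finally have vw: "?v \<bullet> ?w = 0" by simp
  have "(M' *\<^sub>v ?w) \<bullet> (M' *\<^sub>v ?w) = ?w \<bullet> ?w"
    using sym_involution_scalar_prod[OF M' wc M'wc] sym_involution_mult_vec_twice[OF M' wc] by simp
  moreover have "?v \<bullet> ?w = ?w \<bullet> ?w + (M' *\<^sub>v ?w) \<bullet> ?w"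
    using add_scalar_prod_distrib[OF wc M'wc wc] .
  ultimately have "?v \<bullet> ?v = 0"
    using scalar_prod_add_self[OF wc M'wc] vw comm_scalar_prod[OF wc M'wc] by simp
  hence v0: "?v = 0\<^sub>v n" using scalar_prod_self_eq_0_iff[OF vc] by simp
  show "M *\<^sub>v x = M' *\<^sub>v x"
  proof (rule eq_vecI)
    fix i assume "i < dim_vec (M' *\<^sub>v x)"
    hence i: "i < n" using M'c by simp
    show "(M *\<^sub>v x) $ i = (M' *\<^sub>v x) $ i"
      using arg_cong[OF M'u, of "\<lambda>v. v $ i"] arg_cong[OF v0, of "\<lambda>v. v $ i"]
        mult_minus_distrib_mat_vec[OF M'c x Mx] i carrier_vecD[OF x] carrier_vecD[OF Mx] M'c
      by simp
  qed (use Mc M'c in simp)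
qed

lemma sym_involution_eq_if_fixed_sphere_eq:
  assumes "sym_involution n M" "sym_involution n M'" "fixed_sphere n M = fixed_sphere n M'"
  shows "M = M'"
  using sym_involution_eq_if_fixes_eq fixes_eq_if_fixed_sphere_eq sym_involution_carrier assms
  by metis

section \<open>Isometries between unit spheres\<close>

lemma orthonormal_family_le_dim:
  fixes vs :: "nat \<Rightarrow> real vec"
  assumes vc: "\<And>i. i < N \<Longrightarrow> vs i \<in> carrier_vec M"
    and on: "\<And>i j. i < N \<Longrightarrow> j < N \<Longrightarrow> vs i \<bullet> vs j = (if i = j then 1 else 0)"
  shows "N \<le> M"
proof (rule ccontr)
  assume "\<not> N \<le> M"
  hence MN: "M < N" by simp
  \<comment> \<open>Padding the vectors with zeros gives an orthogonal \<open>N \<times> N\<close> matrix with a zero row.\<close>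
  define T :: "real mat" where "T = mat N N (\<lambda>(r, c). if r < M then vs c $ r else 0)"
  have Tc: "T \<in> carrier_mat N N" unfolding T_def by simp
  have "transpose_mat T * T = 1\<^sub>m N"
  proof (rule eq_matI)
    fix i j assume "i < dim_row (1\<^sub>m N :: real mat)" "j < dim_col (1\<^sub>m N :: real mat)"
    hence ij: "i < N" "j < N" by auto
    have "(transpose_mat T * T) $$ (i, j)
        = (\<Sum>r<N. (if r < M then vs i $ r else 0) * (if r < M then vs j $ r else 0))"
      using ij unfolding T_def by (simp add: scalar_prod_def atLeast0LessThan)
    also have "\<dots> = (\<Sum>r\<in>{..<N} \<inter> {..<M}. vs i $ r * vs j $ r)"
      by (simp add: sum.inter_restrict if_distrib cong: if_cong)
    also have "{..<N} \<inter> {..<M} = {0..<M}" using MN by auto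
    also have "(\<Sum>r\<in>{0..<M}. vs i $ r * vs j $ r) = vs i \<bullet> vs j"
      using vc[OF ij(2)] unfolding scalar_prod_def by simp
    finally show "(transpose_mat T * T) $$ (i, j) = 1\<^sub>m N $$ (i, j)" using on[OF ij] ij by simp
  qed (use Tc in auto)
  hence "T * transpose_mat T = 1\<^sub>m N"
    using mat_mult_left_right_inverse[of "transpose_mat T" N T] Tc by simp
  hence "(T * transpose_mat T) $$ (N - 1, N - 1) = 1" using MN by simp
  moreover have "\<not> N - 1 < M" using MN by linarith
  hence "(T * transpose_mat T) $$ (N - 1, N - 1) = 0"
    using MN unfolding T_def by (simp add: scalar_prod_def)
  ultimately show False by simp
qed

lemma sphere_isometry_scalar_prod:
  assumes f: "sphere_isometry n n' f" and x: "x \<in> unit_sphere n" and y: "y \<in> unit_sphere n"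
  shows "f x \<bullet> f y = x \<bullet> y"
proof -
  have fxy: "f x \<in> unit_sphere n'" "f y \<in> unit_sphere n'"
    using f x y unfolding sphere_isometry_def bij_betw_def by auto
  have "(f x - f y) \<bullet> (f x - f y) = (x - y) \<bullet> (x - y)"
    using f x y unfolding sphere_isometry_def vdist_def by simp
  thus ?thesis
    using scalar_prod_diff_self[of "f x" n' "f y"] scalar_prod_diff_self[of x n y] fxy x y
    unfolding unit_sphere_def by auto
qed

lemma sphere_isometry_dim_le:
  assumes f: "sphere_isometry n n' f"
  shows "n \<le> n'"
proof (rule orthonormal_family_le_dim[of n "\<lambda>i. f (unit_vec n i)" n'])
  have u: "unit_vec n i \<in> unit_sphere n" if "i < n" for i
    using that unfolding unit_sphere_def by simp
  show "\<And>i. i < n \<Longrightarrow> f (unit_vec n i) \<in> carrier_vec n'"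
    using f u unfolding sphere_isometry_def bij_betw_def unit_sphere_def by auto
  show "\<And>i j. i < n \<Longrightarrow> j < n \<Longrightarrow> f (unit_vec n i) \<bullet> f (unit_vec n j) = (if i = j then 1 else 0)"
    using sphere_isometry_scalar_prod[OF f u u] by simp
qed

lemma sphere_isometry_inv_into:
  assumes f: "sphere_isometry n n' f"
  shows "sphere_isometry n' n (inv_into (unit_sphere n) f)"
  unfolding sphere_isometry_def
proof (intro conjI ballI)
  have b: "bij_betw f (unit_sphere n) (unit_sphere n')" using f unfolding sphere_isometry_def by simp
  show bi: "bij_betw (inv_into (unit_sphere n) f) (unit_sphere n') (unit_sphere n)"
    using bij_betw_inv_into[OF b] .
  fix x y assume xy: "x \<in> unit_sphere n'" "y \<in> unit_sphere n'"
  let ?g = "inv_into (unit_sphere n) f"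
  have "?g x \<in> unit_sphere n" "?g y \<in> unit_sphere n" using bi xy unfolding bij_betw_def by auto
  moreover have "f (?g x) = x" "f (?g y) = y" using xy b by (auto simp: bij_betw_def f_inv_into_f)
  ultimately show "vdist (?g x) (?g y) = vdist x y" using f unfolding sphere_isometry_def by metis
qed

lemma sphere_isometry_dim_eq: "sphere_isometry n n' f \<Longrightarrow> n = n'"
  using sphere_isometry_dim_le sphere_isometry_inv_into by (metis le_antisym)

lemma sphere_isometry_orth_mat:
  assumes f: "sphere_isometry n n f"
  obtains B where "orth_mat n B" and "\<And>x. x \<in> unit_sphere n \<Longrightarrow> f x = B *\<^sub>v x"
proof
  have u: "unit_vec n i \<in> unit_sphere n" if "i < n" for i
    using that unfolding unit_sphere_def by simp
  have fc: "f x \<in> carrier_vec n" if "x \<in> unit_sphere n" for x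
    using f that unfolding sphere_isometry_def bij_betw_def unit_sphere_def by auto
  define B :: "real mat" where "B = mat n n (\<lambda>(i, j). f (unit_vec n j) $ i)"
  have Bc: "B \<in> carrier_mat n n" unfolding B_def by simp
  have colB: "col B j = f (unit_vec n j)" if "j < n" for j
    unfolding B_def using fc[OF u[OF that]] that by (intro eq_vecI) auto
  have BTB: "transpose_mat B * B = 1\<^sub>m n"
  proof (rule eq_matI)
    fix i j assume "i < dim_row (1\<^sub>m n :: real mat)" "j < dim_col (1\<^sub>m n :: real mat)"
    hence ij: "i < n" "j < n" by auto
    have "(transpose_mat B * B) $$ (i, j) = f (unit_vec n i) \<bullet> f (unit_vec n j)"
      using ij Bc colB by simp
    also have "\<dots> = unit_vec n i \<bullet> unit_vec n j"
      using sphere_isometry_scalar_prod[OF f u[OF ij(1)] u[OF ij(2)]] .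
    finally show "(transpose_mat B * B) $$ (i, j) = 1\<^sub>m n $$ (i, j)" using ij by simp
  qed (use Bc in auto)
  thus B: "orth_mat n B" unfolding orth_mat_def using Bc by simp
  fix x assume x: "x \<in> unit_sphere n"
  have xc: "x \<in> carrier_vec n" using x unfolding unit_sphere_def by auto
  have "transpose_mat B *\<^sub>v f x = x"
  proof (rule eq_vecI)
    fix i assume "i < dim_vec x"
    hence i: "i < n" using xc by simp
    have "(transpose_mat B *\<^sub>v f x) $ i = f (unit_vec n i) \<bullet> f x" using i Bc colB by simp
    also have "\<dots> = unit_vec n i \<bullet> x" using sphere_isometry_scalar_prod[OF f u[OF i] x] .
    finally show "(transpose_mat B *\<^sub>v f x) $ i = x $ i" using i xc by simp
  qed (use Bc xc in simp)
  thus "f x = B *\<^sub>v x" using orth_mat_mult_transpose_vec[OF B fc[OF x]] by simp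
qed

section \<open>Clifford systems and their focal leaves\<close>

locale clifford =
  fixes l :: nat and Ps :: "real mat list"
  assumes clifford_system: "clifford_system l Ps" and l_pos: "l \<ge> 1"
begin

abbreviation "N \<equiv> 2 * l"
abbreviation "k \<equiv> length Ps"
abbreviation "P i \<equiv> Ps ! i"
abbreviation "L c \<equiv> lin_comb N Ps c"

definition quad :: "nat \<Rightarrow> real vec \<Rightarrow> real" where
  "quad i x = (P i *\<^sub>v x) \<bullet> x"

definition sqnorm :: "(nat \<Rightarrow> real) \<Rightarrow> real" where
  "sqnorm c = (\<Sum>i<k. c i * c i)"

lemma length_ge_2: "k \<ge> 2"
  using clifford_system unfolding clifford_system_def by auto

lemma P_carrier: "i < k \<Longrightarrow> P i \<in> carrier_mat N N"
  using clifford_system unfolding clifford_system_def sym_mat_def by auto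

lemma P_dim [simp]: "i < k \<Longrightarrow> dim_row (P i) = N" "i < k \<Longrightarrow> dim_col (P i) = N"
  using P_carrier by auto

lemma P_transpose: "i < k \<Longrightarrow> transpose_mat (P i) = P i"
  using clifford_system unfolding clifford_system_def sym_mat_def by auto

lemma P_mult_self: "i < k \<Longrightarrow> P i * P i = 1\<^sub>m N"
  using clifford_system unfolding clifford_system_def by auto

lemma P_anticommute: "i < k \<Longrightarrow> j < k \<Longrightarrow> i \<noteq> j \<Longrightarrow> P i * P j = - (P j * P i)"
  using clifford_system unfolding clifford_system_def by blast

lemma P_mult_vec_carrier [simp]: "i < k \<Longrightarrow> x \<in> carrier_vec N \<Longrightarrow> P i *\<^sub>v x \<in> carrier_vec N"
  by (rule mult_mat_vec_carrier[OF P_carrier])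

lemma P_scalar_prod:
  assumes "i < k" "x \<in> carrier_vec N" "y \<in> carrier_vec N"
  shows "(P i *\<^sub>v x) \<bullet> y = x \<bullet> (P i *\<^sub>v y)"
  using transpose_vec_mult_scalar[OF P_carrier[OF assms(1)] assms(3) assms(2)] P_transpose[OF assms(1)]
  by simp

lemma P_scalar_prod_swap:
  assumes "i < k" "x \<in> carrier_vec N" "y \<in> carrier_vec N"
  shows "(P i *\<^sub>v x) \<bullet> y = (P i *\<^sub>v y) \<bullet> x"
  using P_scalar_prod[OF assms] comm_scalar_prod[OF assms(2) P_mult_vec_carrier[OF assms(1,3)]] by simp

lemma P_mult_vec_twice [simp]:
  assumes "i < k" "x \<in> carrier_vec N"
  shows "P i *\<^sub>v (P i *\<^sub>v x) = x"
  using assms P_mult_self[OF assms(1)] assoc_mult_mat_vec[OF P_carrier P_carrier, of i i x]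
  by simp

lemma P_anticommute_vec:
  assumes "i < k" "j < k" "i \<noteq> j" "x \<in> carrier_vec N"
  shows "P i *\<^sub>v (P j *\<^sub>v x) = - (P j *\<^sub>v (P i *\<^sub>v x))"
proof -
  have "P i *\<^sub>v (P j *\<^sub>v x) = (P i * P j) *\<^sub>v x"
    using assms P_carrier[OF assms(1)] P_carrier[OF assms(2)] by simp
  also have "\<dots> = (- (P j * P i)) *\<^sub>v x" using P_anticommute[OF assms(1-3)] by simp
  also have "\<dots> = - ((P j * P i) *\<^sub>v x)"
    using assms P_carrier[OF assms(1)] P_carrier[OF assms(2)] by (subst uminus_mult_mat_vec) auto
  also have "(P j * P i) *\<^sub>v x = P j *\<^sub>v (P i *\<^sub>v x)"
    using assms P_carrier[OF assms(1)] P_carrier[OF assms(2)] by simp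
  finally show ?thesis .
qed

lemma P_anticommute_scalar_prod:
  assumes "i < k" "j < k" "i \<noteq> j" "x \<in> carrier_vec N" "y \<in> carrier_vec N"
  shows "(P i *\<^sub>v (P j *\<^sub>v x)) \<bullet> y = - ((P j *\<^sub>v (P i *\<^sub>v x)) \<bullet> y)"
  using P_anticommute_vec[OF assms(1-4)] assms by (subst scalar_prod_uminus_left[symmetric]) auto

lemma P_anticommutator_scalar_prod:
  assumes "i < k" "j < k" "x \<in> carrier_vec N" "y \<in> carrier_vec N"
  shows "(P j *\<^sub>v (P i *\<^sub>v x)) \<bullet> y + (P i *\<^sub>v (P j *\<^sub>v x)) \<bullet> y = (if i = j then 2 * (x \<bullet> y) else 0)"
  using assms P_anticommute_scalar_prod[of j i x y] by auto

lemma L_carrier [simp]: "L c \<in> carrier_mat N N"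
  unfolding lin_comb_def by simp

lemma L_mult_vec_carrier [simp]: "x \<in> carrier_vec N \<Longrightarrow> L c *\<^sub>v x \<in> carrier_vec N"
  by (rule mult_mat_vec_carrier[OF L_carrier])

lemma L_scalar_prod:
  assumes x: "x \<in> carrier_vec N" and y: "y \<in> carrier_vec N"
  shows "(L c *\<^sub>v x) \<bullet> y = (\<Sum>i<k. c i * ((P i *\<^sub>v x) \<bullet> y))"
proof -
  have "(L c *\<^sub>v x) \<bullet> y = (\<Sum>r<N. (\<Sum>t<N. (\<Sum>i<k. c i * P i $$ (r,t)) * x $ t) * y $ r)"
    using x y unfolding scalar_prod_def mult_mat_vec_def lin_comb_def row_def
    by (auto simp: atLeast0LessThan intro!: sum.cong)
  also have "\<dots> = (\<Sum>i<k. (\<Sum>r<N. (\<Sum>t<N. c i * P i $$ (r,t) * x $ t * y $ r)))"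
    by (simp add: sum_distrib_right sum.swap[of _ "{..<k}"])
  also have "\<dots> = (\<Sum>i<k. c i * ((P i *\<^sub>v x) \<bullet> y))"
    using x y unfolding scalar_prod_def mult_mat_vec_def row_def
    by (auto simp: atLeast0LessThan sum_distrib_left sum_distrib_right mult.assoc intro!: sum.cong)
  finally show ?thesis .
qed

lemma L_scalar_prod_swap:
  assumes "x \<in> carrier_vec N" "y \<in> carrier_vec N"
  shows "(L c *\<^sub>v x) \<bullet> y = (L c *\<^sub>v y) \<bullet> x"
  unfolding L_scalar_prod[OF assms] L_scalar_prod[OF assms(2,1)]
  using P_scalar_prod_swap assms by (intro sum.cong) auto

lemma L_scalar_prod_sym:
  assumes "x \<in> carrier_vec N" "y \<in> carrier_vec N"
  shows "(L c *\<^sub>v x) \<bullet> y = x \<bullet> (L c *\<^sub>v y)"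
  using L_scalar_prod_swap[OF assms] comm_scalar_prod[OF assms(1) L_mult_vec_carrier[OF assms(2)]]
  by simp

lemma L_scalar_prod_self: "x \<in> carrier_vec N \<Longrightarrow> (L c *\<^sub>v x) \<bullet> x = (\<Sum>i<k. c i * quad i x)"
  unfolding quad_def using L_scalar_prod .

lemma L_cong: "(\<And>i. i < k \<Longrightarrow> c i = d i) \<Longrightarrow> L c = L d"
  unfolding lin_comb_def by (intro eq_matI) auto

lemma L_scale: "L (\<lambda>i. r * c i) = r \<cdot>\<^sub>m L c"
  unfolding lin_comb_def by (intro eq_matI) (auto simp: sum_distrib_left mult.assoc)

lemma L_mult_vec_twice_scalar_prod:
  assumes x: "x \<in> carrier_vec N" and w: "w \<in> carrier_vec N"
  shows "(L c *\<^sub>v (L c *\<^sub>v x)) \<bullet> w = sqnorm c * (x \<bullet> w)"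
proof -
  define T where "T a b = c a * c b * ((P b *\<^sub>v (P a *\<^sub>v x)) \<bullet> w)" for a b
  have "(L c *\<^sub>v (L c *\<^sub>v x)) \<bullet> w = (\<Sum>b<k. c b * ((L c *\<^sub>v x) \<bullet> (P b *\<^sub>v w)))"
    using L_scalar_prod[OF L_mult_vec_carrier[OF x] w] P_scalar_prod x w by (auto intro: sum.cong)
  also have "\<dots> = (\<Sum>b<k. \<Sum>a<k. T a b)"
    unfolding T_def using L_scalar_prod P_scalar_prod x w
    by (auto simp: sum_distrib_left intro!: sum.cong)
  finally have e1: "(L c *\<^sub>v (L c *\<^sub>v x)) \<bullet> w = (\<Sum>b<k. \<Sum>a<k. T a b)" .
  have "2 * (\<Sum>b<k. \<Sum>a<k. T a b) = (\<Sum>b<k. \<Sum>a<k. T a b + T b a)"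
    by (simp add: sum.distrib sum.swap[of T])
  also have "\<dots> = (\<Sum>b<k. \<Sum>a<k. if a = b then 2 * (c a * c a * (x \<bullet> w)) else 0)"
  proof (intro sum.cong refl)
    fix a b assume ab: "b \<in> {..<k}" "a \<in> {..<k}"
    have "T a b + T b a = c a * c b * ((P b *\<^sub>v (P a *\<^sub>v x)) \<bullet> w + (P a *\<^sub>v (P b *\<^sub>v x)) \<bullet> w)"
      unfolding T_def by (simp add: algebra_simps)
    thus "T a b + T b a = (if a = b then 2 * (c a * c a * (x \<bullet> w)) else 0)"
      using P_anticommutator_scalar_prod ab x w by auto
  qed
  also have "\<dots> = 2 * (sqnorm c * (x \<bullet> w))"
    unfolding sqnorm_def by (simp add: sum_distrib_left sum_distrib_right)
  finally show ?thesis using e1 by simp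
qed

lemma L_mult_vec_twice: "sqnorm c = 1 \<Longrightarrow> x \<in> carrier_vec N \<Longrightarrow> L c *\<^sub>v (L c *\<^sub>v x) = x"
  by (intro eq_vec_if_scalar_prod_eq[of _ N]) (auto simp: L_mult_vec_twice_scalar_prod)

lemma L_sym_involution:
  assumes a: "sqnorm a = 1"
  shows "sym_involution N (L a)"
  unfolding sym_involution_def sym_mat_def
proof (intro conjI L_carrier)
  have "P i $$ (r, s) = P i $$ (s, r)" if "i < k" "r < N" "s < N" for i r s
    using arg_cong[OF P_transpose[OF that(1)], of "\<lambda>A. A $$ (r, s)"] that by simp
  thus "transpose_mat (L a) = L a"
    unfolding lin_comb_def by (intro eq_matI) auto
  show "L a * L a = 1\<^sub>m N"
    using L_mult_vec_twice[OF a] mult_carrier_mat[OF L_carrier L_carrier]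
    by (intro eq_mat_if_mult_vec_eq[of _ N]) (auto simp: assoc_mult_mat_vec[of _ N N _ N])
qed

lemma L_norm: "sqnorm c = 1 \<Longrightarrow> x \<in> carrier_vec N \<Longrightarrow> (L c *\<^sub>v x) \<bullet> (L c *\<^sub>v x) = x \<bullet> x"
  using L_scalar_prod_sym[of "L c *\<^sub>v x" x c] L_mult_vec_twice by simp

lemma L_coeff_unique:
  assumes "L c = L d" "i < k"
  shows "c i = d i"
proof -
  define e where "e j = c j - d j" for j
  define w :: "real vec" where "w = unit_vec N 0"
  have w: "w \<in> carrier_vec N" "w \<bullet> w = 1" unfolding w_def using l_pos by auto
  have "(L e *\<^sub>v y) \<bullet> z = 0" if "y \<in> carrier_vec N" "z \<in> carrier_vec N" for y z
  proof -
    have "(L e *\<^sub>v y) \<bullet> z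
        = (\<Sum>i<k. c i * ((P i *\<^sub>v y) \<bullet> z)) - (\<Sum>i<k. d i * ((P i *\<^sub>v y) \<bullet> z))"
      unfolding L_scalar_prod[OF that] e_def by (simp add: algebra_simps sum_subtractf)
    thus ?thesis using L_scalar_prod[OF that, of c] L_scalar_prod[OF that, of d] assms(1) by simp
  qed
  hence "sqnorm e = 0" using L_mult_vec_twice_scalar_prod[OF w(1) w(1), of e] w by simp
  hence "\<forall>j\<in>{..<k}. e j * e j = 0"
    unfolding sqnorm_def by (subst (asm) sum_nonneg_eq_0_iff) auto
  thus ?thesis using assms(2) unfolding e_def by auto
qed

lemma sqnorm_nonneg: "0 \<le> sqnorm c"
  unfolding sqnorm_def by (intro sum_nonneg) auto

lemma sqnorm_quad_le_1:
  assumes x: "x \<in> unit_sphere N"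
  shows "sqnorm (\<lambda>i. quad i x) \<le> 1"
proof -
  let ?c = "\<lambda>i. quad i x"
  have xc: "x \<in> carrier_vec N" "x \<bullet> x = 1" using x unfolding unit_sphere_def by auto
  have "x \<bullet> (L ?c *\<^sub>v x) = sqnorm ?c"
    using L_scalar_prod_self[OF xc(1), of ?c] comm_scalar_prod[OF xc(1) L_mult_vec_carrier[OF xc(1)]]
    unfolding sqnorm_def by simp
  moreover have "(L ?c *\<^sub>v x) \<bullet> (L ?c *\<^sub>v x) = sqnorm ?c"
    using L_scalar_prod_sym[OF L_mult_vec_carrier[OF xc(1)] xc(1), of ?c]
      L_mult_vec_twice_scalar_prod[OF xc(1) xc(1), of ?c] xc by simp
  ultimately show ?thesis
    using scalar_prod_self_nonneg[of "x - L ?c *\<^sub>v x"] scalar_prod_diff_self[OF xc(1), of "L ?c *\<^sub>v x"] xc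
    by simp
qed

lemma L_scalar_prod_self_le_1:
  assumes a: "sqnorm a = 1" and x: "x \<in> unit_sphere N"
  shows "(L a *\<^sub>v x) \<bullet> x \<le> 1" and "(L a *\<^sub>v x) \<bullet> x = 1 \<Longrightarrow> L a *\<^sub>v x = x"
proof -
  have xc: "x \<in> carrier_vec N" "x \<bullet> x = 1" using x unfolding unit_sphere_def by auto
  have d: "(L a *\<^sub>v x - x) \<bullet> (L a *\<^sub>v x - x) = 2 - 2 * ((L a *\<^sub>v x) \<bullet> x)"
    using scalar_prod_diff_self[OF L_mult_vec_carrier[OF xc(1)] xc(1), of a] L_norm[OF a xc(1)] xc
    by simp
  show "(L a *\<^sub>v x) \<bullet> x \<le> 1" using d scalar_prod_self_nonneg[of "L a *\<^sub>v x - x"] by simp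
  assume "(L a *\<^sub>v x) \<bullet> x = 1"
  hence "L a *\<^sub>v x - x = 0\<^sub>v N" using d scalar_prod_self_eq_0_iff[of "L a *\<^sub>v x - x" N] xc by simp
  thus "L a *\<^sub>v x = x" using eq_vec_if_diff_eq_0[OF L_mult_vec_carrier[OF xc(1)] xc(1)] by blast
qed

definition leaf :: "real vec \<Rightarrow> real vec set" where
  "leaf x = {y \<in> unit_sphere N. \<forall>i<k. quad i y = quad i x}"

lemma pi_C_eq_iff: "pi_C l Ps y = pi_C l Ps x \<longleftrightarrow> (\<forall>i<k. quad i y = quad i x)"
proof -
  have pi: "pi_C l Ps z = L (\<lambda>i. quad i z)" for z unfolding pi_C_def quad_def by simp
  show ?thesis unfolding pi
  proof
    show "L (\<lambda>i. quad i y) = L (\<lambda>i. quad i x) \<Longrightarrow> \<forall>i<k. quad i y = quad i x"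
      using L_coeff_unique by blast
    show "\<forall>i<k. quad i y = quad i x \<Longrightarrow> L (\<lambda>i. quad i y) = L (\<lambda>i. quad i x)"
      by (intro L_cong) blast
  qed
qed

lemma leaves_eq: "leaves l Ps = leaf ` unit_sphere N"
  unfolding leaves_def leaf_def pi_C_eq_iff image_def by blast

lemma leaves_subset_unit_sphere: "Lf \<in> leaves l Ps \<Longrightarrow> Lf \<subseteq> unit_sphere N"
  unfolding leaves_eq leaf_def by auto

text \<open>Equality in Bessel's inequality for the quadratic forms \<open>quad i\<close>.\<close>
lemma quad_eq_iff_L_fixed:
  assumes a: "sqnorm a = 1" and y: "y \<in> unit_sphere N"
  shows "(\<forall>i<k. quad i y = a i) \<longleftrightarrow> L a *\<^sub>v y = y"
proof
  have yc: "y \<in> carrier_vec N" "y \<bullet> y = 1" using y unfolding unit_sphere_def by auto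
  {
    assume "\<forall>i<k. quad i y = a i"
    hence "(L a *\<^sub>v y) \<bullet> y = 1" using L_scalar_prod_self[OF yc(1), of a] a unfolding sqnorm_def by simp
    thus "L a *\<^sub>v y = y" using L_scalar_prod_self_le_1(2)[OF a y] by simp
  }
  assume "L a *\<^sub>v y = y"
  hence s1: "(\<Sum>i<k. a i * quad i y) = 1" using L_scalar_prod_self[OF yc(1), of a] yc by simp
  have "(\<Sum>i<k. (quad i y - a i) * (quad i y - a i))
      = sqnorm (\<lambda>i. quad i y) - 2 * (\<Sum>i<k. a i * quad i y) + sqnorm a"
    unfolding sqnorm_def by (simp add: algebra_simps sum.distrib sum_subtractf sum_distrib_left)
  also have "\<dots> \<le> 0" using s1 sqnorm_quad_le_1[OF y] a by simp
  finally have "(\<Sum>i<k. (quad i y - a i) * (quad i y - a i)) = 0"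
    using sum_nonneg[of "{..<k}" "\<lambda>i. (quad i y - a i) * (quad i y - a i)"] by simp
  hence "\<forall>i\<in>{..<k}. (quad i y - a i) * (quad i y - a i) = 0"
    by (subst (asm) sum_nonneg_eq_0_iff) auto
  thus "\<forall>i<k. quad i y = a i" by auto
qed

lemma L_P_anticommutator_scalar_prod:
  assumes i: "i < k" and z: "z \<in> carrier_vec N" and w: "w \<in> carrier_vec N"
  shows "(L a *\<^sub>v (P i *\<^sub>v z)) \<bullet> w + (P i *\<^sub>v (L a *\<^sub>v z)) \<bullet> w = 2 * a i * (z \<bullet> w)"
proof -
  have "(P i *\<^sub>v (L a *\<^sub>v z)) \<bullet> w = (\<Sum>b<k. a b * ((P b *\<^sub>v z) \<bullet> (P i *\<^sub>v w)))"
    using P_scalar_prod[OF i L_mult_vec_carrier[OF z] w] L_scalar_prod[OF z P_mult_vec_carrier[OF i w]]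
    by simp
  also have "\<dots> = (\<Sum>b<k. a b * ((P i *\<^sub>v (P b *\<^sub>v z)) \<bullet> w))"
    using P_scalar_prod[OF i _ w] z by (intro sum.cong) auto
  finally have "(L a *\<^sub>v (P i *\<^sub>v z)) \<bullet> w + (P i *\<^sub>v (L a *\<^sub>v z)) \<bullet> w
     = (\<Sum>b<k. a b * ((P b *\<^sub>v (P i *\<^sub>v z)) \<bullet> w + (P i *\<^sub>v (P b *\<^sub>v z)) \<bullet> w))"
    using L_scalar_prod[OF P_mult_vec_carrier[OF i z] w] by (simp add: algebra_simps sum.distrib)
  also have "\<dots> = (\<Sum>b<k. if b = i then 2 * a i * (z \<bullet> w) else 0)"
    using P_anticommutator_scalar_prod[OF i _ z w] by (intro sum.cong) auto
  finally show ?thesis using i by simp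
qed

lemma quad_L:
  assumes a: "sqnorm a = 1" and i: "i < k" and y: "y \<in> carrier_vec N"
  shows "quad i (L a *\<^sub>v y) = 2 * a i * ((L a *\<^sub>v y) \<bullet> y) - quad i y"
proof -
  have Ly: "L a *\<^sub>v y \<in> carrier_vec N" using y by simp
  have "quad i (L a *\<^sub>v y) = (L a *\<^sub>v (P i *\<^sub>v (L a *\<^sub>v y))) \<bullet> y"
    unfolding quad_def using L_scalar_prod_sym[OF P_mult_vec_carrier[OF i Ly] y, of a] by simp
  also have "\<dots> = 2 * a i * ((L a *\<^sub>v y) \<bullet> y) - (P i *\<^sub>v (L a *\<^sub>v (L a *\<^sub>v y))) \<bullet> y"
    using L_P_anticommutator_scalar_prod[OF i Ly y, of a] by simp
  finally show ?thesis unfolding quad_def using L_mult_vec_twice[OF a y] by simp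
qed

lemma quad_P:
  assumes i: "i < k" and j: "j < k" and y: "y \<in> carrier_vec N"
  shows "quad i (P j *\<^sub>v y) = (if i = j then quad i y else - quad i y)"
proof (cases "i = j")
  case True
  thus ?thesis unfolding quad_def using comm_scalar_prod[OF y P_mult_vec_carrier[OF j y]] j y by simp
next
  case False
  have "quad i (P j *\<^sub>v y) = - ((P j *\<^sub>v (P i *\<^sub>v y)) \<bullet> (P j *\<^sub>v y))"
    unfolding quad_def using P_anticommute_scalar_prod[OF i j False y P_mult_vec_carrier[OF j y]] .
  also have "(P j *\<^sub>v (P i *\<^sub>v y)) \<bullet> (P j *\<^sub>v y) = (P i *\<^sub>v y) \<bullet> y"
    using P_scalar_prod[OF j P_mult_vec_carrier[OF i y] P_mult_vec_carrier[OF j y]] j y by simp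
  finally show ?thesis using False unfolding quad_def by simp
qed

lemma L_fixes_add_self:
  assumes a: "sqnorm a = 1" and y: "y \<in> carrier_vec N"
  shows "L a *\<^sub>v (y + L a *\<^sub>v y) = y + L a *\<^sub>v y"
  using mult_add_distrib_mat_vec[OF L_carrier y L_mult_vec_carrier[OF y]] L_mult_vec_twice[OF a y]
    comm_add_vec[OF L_mult_vec_carrier[OF y] y] by simp

text \<open>If \<open>L a\<close> had no fixed point, it would be \<open>-Id\<close>; then \<open>\<Sum>i. a i * quad i y = -1\<close> for
  all unit \<open>y\<close>, and evaluating at the points \<open>P j y\<close>, which flip the signs of all \<open>quad i\<close>
  with \<open>i \<noteq> j\<close>, forces every summand to be \<open>-1\<close>, contradicting \<open>k \<ge> 2\<close>.\<close>
lemma fixed_sphere_L_nonempty: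
  assumes a: "sqnorm a = 1"
  shows "fixed_sphere N (L a) \<noteq> {}"
proof
  assume empty: "fixed_sphere N (L a) = {}"
  have neg: "(\<Sum>i<k. a i * quad i y) = -1" if y: "y \<in> unit_sphere N" for y
  proof -
    have yc: "y \<in> carrier_vec N" "y \<bullet> y = 1" using y unfolding unit_sphere_def by auto
    let ?u = "y + L a *\<^sub>v y"
    have uc: "?u \<in> carrier_vec N" using yc by simp
    have "?u = 0\<^sub>v N"
    proof (rule ccontr)
      assume "?u \<noteq> 0\<^sub>v N"
      hence "normalize_vec ?u \<in> fixed_sphere N (L a)"
        using normalize_vec_in_unit_sphere[OF uc]
          mult_normalize_vec_fixed[OF L_carrier uc L_fixes_add_self[OF a yc(1)]]
        unfolding fixed_sphere_def by auto
      thus False using empty by simp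
    qed
    hence "(y + L a *\<^sub>v y) \<bullet> y = 0" using yc by simp
    hence "y \<bullet> y + (L a *\<^sub>v y) \<bullet> y = 0"
      using add_scalar_prod_distrib[OF yc(1) L_mult_vec_carrier[OF yc(1)] yc(1)] by simp
    thus ?thesis using L_scalar_prod_self[OF yc(1), of a] yc by simp
  qed
  define y0 :: "real vec" where "y0 = unit_vec N 0"
  have y0: "y0 \<in> unit_sphere N" "y0 \<in> carrier_vec N"
    unfolding y0_def unit_sphere_def using l_pos by auto
  have "a j * quad j y0 = -1" if j: "j < k" for j
  proof -
    have "(P j *\<^sub>v y0) \<bullet> (P j *\<^sub>v y0) = y0 \<bullet> y0"
      using P_scalar_prod[OF j y0(2) P_mult_vec_carrier[OF j y0(2)]] j y0 by simp
    hence "P j *\<^sub>v y0 \<in> unit_sphere N" using y0 j unfolding unit_sphere_def by simp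
    hence "-1 = (\<Sum>i<k. a i * quad i (P j *\<^sub>v y0))" using neg by simp
    also have "\<dots> = (\<Sum>i<k. a i * (if i = j then quad i y0 else - quad i y0))"
      using quad_P[OF _ j y0(2)] by (intro sum.cong) auto
    also have "\<dots> = 2 * (a j * quad j y0) - (\<Sum>i<k. a i * quad i y0)" using sum_flip_signs[OF j] .
    finally show ?thesis using neg[OF y0(1)] by simp
  qed
  hence "-1 = - real k" using neg[OF y0(1)] by simp
  thus False using length_ge_2 by simp
qed

lemma leaf_eq_fixed_sphere:
  assumes a: "sqnorm a = 1" and x: "x \<in> fixed_sphere N (L a)"
  shows "leaf x = fixed_sphere N (L a)"
proof -
  have "\<forall>i<k. quad i x = a i" using quad_eq_iff_L_fixed[OF a] x unfolding fixed_sphere_def by blast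
  thus ?thesis using quad_eq_iff_L_fixed[OF a] unfolding leaf_def fixed_sphere_def by auto
qed

lemma fixed_sphere_L_in_leaves:
  assumes a: "sqnorm a = 1"
  shows "fixed_sphere N (L a) \<in> leaves l Ps"
proof -
  obtain x where x: "x \<in> fixed_sphere N (L a)" using fixed_sphere_L_nonempty[OF a] by blast
  hence "x \<in> unit_sphere N" unfolding fixed_sphere_def by simp
  thus ?thesis unfolding leaves_eq using leaf_eq_fixed_sphere[OF a x] by blast
qed

lemma coeffs_eq_scaled_unit:
  obtains a where "sqnorm a = 1" and "\<And>i. i < k \<Longrightarrow> c i = sqrt (sqnorm c) * a i"
proof (cases "sqnorm c = 0")
  case True
  hence "\<forall>i\<in>{..<k}. c i * c i = 0" unfolding sqnorm_def by (subst (asm) sum_nonneg_eq_0_iff) auto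
  moreover have "0 < k" using length_ge_2 by linarith
  hence "sqnorm (\<lambda>i. if i = 0 then 1 else 0) = 1"
    unfolding sqnorm_def by (simp add: if_distrib cong: if_cong)
  ultimately show ?thesis using that True by auto
next
  case False
  hence s: "sqrt (sqnorm c) > 0" using sqnorm_nonneg[of c] by simp
  have "sqnorm (\<lambda>i. c i / sqrt (sqnorm c)) = sqnorm c / (sqrt (sqnorm c))\<^sup>2"
    unfolding sqnorm_def by (simp add: sum_divide_distrib power2_eq_square)
  hence "sqnorm (\<lambda>i. c i / sqrt (sqnorm c)) = 1" using False sqnorm_nonneg[of c] by simp
  thus ?thesis using that s by simp
qed

text \<open>\<open>L a\<close> maps such a leaf to itself, so it contains the normalised midpoint of \<open>x\<close> and
  \<open>L a x\<close>, which is fixed by \<open>L a\<close>; this forces \<open>(L a y) \<bullet> y = 1\<close> on the leaf.\<close>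
lemma leaf_closed_under_normalized_sums_imp_focal:
  assumes x: "x \<in> unit_sphere N" and closed: "closed_under_normalized_sums N (leaf x)"
  shows "\<exists>a. sqnorm a = 1 \<and> leaf x = fixed_sphere N (L a)"
proof -
  have xc: "x \<in> carrier_vec N" "x \<bullet> x = 1" using x unfolding unit_sphere_def by auto
  define \<beta> where "\<beta> = sqrt (sqnorm (\<lambda>i. quad i x))"
  obtain a where a: "sqnorm a = 1" and ab: "\<And>i. i < k \<Longrightarrow> quad i x = \<beta> * a i"
    using coeffs_eq_scaled_unit[of "\<lambda>i. quad i x"] unfolding \<beta>_def by blast
  have beta: "(L a *\<^sub>v y) \<bullet> y = \<beta>" if y: "y \<in> leaf x" for y
  proof -
    have "y \<in> carrier_vec N" using y unfolding leaf_def unit_sphere_def by simp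
    hence "(L a *\<^sub>v y) \<bullet> y = (\<Sum>i<k. a i * quad i x)"
      using L_scalar_prod_self[of y a] y unfolding leaf_def by simp
    also have "\<dots> = \<beta> * sqnorm a"
      unfolding sqnorm_def sum_distrib_left using ab by (intro sum.cong) simp_all
    finally show ?thesis using a by simp
  qed
  have xl: "x \<in> leaf x" unfolding leaf_def using x by auto
  have mem: "L a *\<^sub>v x \<in> leaf x"
  proof -
    have "L a *\<^sub>v x \<in> unit_sphere N" unfolding unit_sphere_def using L_norm[OF a xc(1)] xc by simp
    moreover have "quad i (L a *\<^sub>v x) = quad i x" if i: "i < k" for i
      using quad_L[OF a i xc(1)] beta[OF xl] ab[OF i] by simp
    ultimately show ?thesis unfolding leaf_def by auto
  qed
  let ?u = "x + L a *\<^sub>v x"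
  have uc: "?u \<in> carrier_vec N" using xc by simp
  have "?u \<bullet> x = 1 + \<beta>"
    using add_scalar_prod_distrib[OF xc(1) L_mult_vec_carrier[OF xc(1)] xc(1)] beta[OF xl] xc by simp
  moreover have "\<beta> \<ge> 0" unfolding \<beta>_def using sqnorm_nonneg by simp
  ultimately have "?u \<noteq> 0\<^sub>v N" using xc by (intro notI) simp
  hence "normalize_vec ?u \<in> leaf x"
    using closed xl mem unfolding closed_under_normalized_sums_def by blast
  moreover have "L a *\<^sub>v normalize_vec ?u = normalize_vec ?u"
    using mult_normalize_vec_fixed[OF L_carrier uc L_fixes_add_self[OF a xc(1)]] .
  ultimately have "\<beta> = 1"
    using beta[of "normalize_vec ?u"] unfolding leaf_def unit_sphere_def by simp
  hence "x \<in> fixed_sphere N (L a)"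
    using L_scalar_prod_self_le_1(2)[OF a x] beta[OF xl] x unfolding fixed_sphere_def by simp
  thus ?thesis using leaf_eq_fixed_sphere[OF a] a by blast
qed

lemma mat_span_eq_scaled_units: "mat_span N Ps = {r \<cdot>\<^sub>m L a | r a. sqnorm a = 1}"
proof (intro equalityI subsetI)
  fix X assume "X \<in> mat_span N Ps"
  then obtain c where X: "X = L c" unfolding mat_span_def by auto
  obtain a where a: "sqnorm a = 1" "\<And>i. i < k \<Longrightarrow> c i = sqrt (sqnorm c) * a i"
    using coeffs_eq_scaled_unit by blast
  have "X = sqrt (sqnorm c) \<cdot>\<^sub>m L a" unfolding X L_scale[symmetric] using a(2) by (rule L_cong)
  thus "X \<in> {r \<cdot>\<^sub>m L a | r a. sqnorm a = 1}" using a(1) by blast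
next
  fix X assume "X \<in> {r \<cdot>\<^sub>m L a | r a. sqnorm a = 1}"
  thus "X \<in> mat_span N Ps" unfolding mat_span_def L_scale[symmetric] by auto
qed

end

section \<open>Orthogonal maps between the foliations\<close>

lemma focal_leaf_orth_conj:
  assumes P: "clifford l Ps" and Q: "clifford l Qs" and B: "orth_mat (2 * l) B"
    and leaves: "leaves l Qs = (\<lambda>Lf. (\<lambda>x. B *\<^sub>v x) ` Lf) ` leaves l Ps"
    and c: "clifford.sqnorm Qs c = 1"
  shows "\<exists>a. clifford.sqnorm Ps a = 1 \<and>
           lin_comb (2 * l) Qs c = B * lin_comb (2 * l) Ps a * transpose_mat B"
proof -
  interpret P: clifford l Ps by fact
  interpret Q: clifford l Qs by fact
  obtain Lf where Lf: "Lf \<in> leaves l Ps"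
    and image: "fixed_sphere (2 * l) (Q.L c) = (\<lambda>x. B *\<^sub>v x) ` Lf"
    using Q.fixed_sphere_L_in_leaves[OF c] leaves by auto
  have "Lf \<subseteq> carrier_vec (2 * l)"
    using P.leaves_subset_unit_sphere[OF Lf] unfolding unit_sphere_def by auto
  hence "closed_under_normalized_sums (2 * l) Lf"
    using closed_under_normalized_sums_orth_preimage[OF B] image
      closed_under_normalized_sums_fixed_sphere[OF Q.L_carrier] by metis
  moreover obtain x where x: "x \<in> unit_sphere (2 * l)" "Lf = P.leaf x"
    using Lf unfolding P.leaves_eq by blast
  ultimately obtain a where a: "P.sqnorm a = 1" and Lfa: "Lf = fixed_sphere (2 * l) (P.L a)"
    using P.leaf_closed_under_normalized_sums_imp_focal by blast
  have "fixed_sphere (2 * l) (B * P.L a * transpose_mat B) = fixed_sphere (2 * l) (Q.L c)"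
    using fixed_sphere_orth_conj[OF B P.L_carrier] image Lfa by simp
  hence "Q.L c = B * P.L a * transpose_mat B"
    using sym_involution_eq_if_fixed_sphere_eq Q.L_sym_involution[OF c]
      sym_involution_orth_conj[OF B P.L_sym_involution[OF a]] by metis
  thus ?thesis using a by blast
qed

lemma leaves_orth_image_transpose:
  assumes P: "clifford l Ps" and B: "orth_mat (2 * l) B"
    and leaves: "leaves l Qs = (\<lambda>Lf. (\<lambda>x. B *\<^sub>v x) ` Lf) ` leaves l Ps"
  shows "leaves l Ps = (\<lambda>Lf. (\<lambda>x. transpose_mat B *\<^sub>v x) ` Lf) ` leaves l Qs"
proof -
  have "(\<lambda>Lf. (\<lambda>x. transpose_mat B *\<^sub>v x) ` Lf) ` leaves l Qs
      = (\<lambda>Lf. (\<lambda>x. transpose_mat B *\<^sub>v (B *\<^sub>v x)) ` Lf) ` leaves l Ps"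
    unfolding leaves image_image ..
  also have "\<dots> = (\<lambda>Lf. Lf) ` leaves l Ps"
  proof (rule image_cong[OF refl])
    fix Lf assume "Lf \<in> leaves l Ps"
    hence "Lf \<subseteq> carrier_vec (2 * l)"
      using clifford.leaves_subset_unit_sphere[OF P] unfolding unit_sphere_def by blast
    hence "(\<lambda>x. transpose_mat B *\<^sub>v (B *\<^sub>v x)) ` Lf = (\<lambda>x. x) ` Lf"
      using orth_mat_transpose_mult_vec[OF B] by (intro image_cong) auto
    thus "(\<lambda>x. transpose_mat B *\<^sub>v (B *\<^sub>v x)) ` Lf = Lf" by simp
  qed
  finally show ?thesis by simp
qed

lemma leaves_orth_image_imp_units_conj:
  assumes P: "clifford l Ps" and Q: "clifford l Qs" and B: "orth_mat (2 * l) B"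
    and leaves: "leaves l Qs = (\<lambda>Lf. (\<lambda>x. B *\<^sub>v x) ` Lf) ` leaves l Ps"
  shows "{lin_comb (2 * l) Qs c | c. clifford.sqnorm Qs c = 1}
    = (\<lambda>X. B * X * transpose_mat B) ` {lin_comb (2 * l) Ps a | a. clifford.sqnorm Ps a = 1}"
proof (intro equalityI subsetI)
  fix X assume "X \<in> {lin_comb (2 * l) Qs c | c. clifford.sqnorm Qs c = 1}"
  thus "X \<in> (\<lambda>X. B * X * transpose_mat B) ` {lin_comb (2 * l) Ps a | a. clifford.sqnorm Ps a = 1}"
    using focal_leaf_orth_conj[OF P Q B leaves] by blast
next
  fix X
  assume "X \<in> (\<lambda>X. B * X * transpose_mat B) ` {lin_comb (2 * l) Ps a | a. clifford.sqnorm Ps a = 1}"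
  then obtain a where a: "clifford.sqnorm Ps a = 1"
    and X: "X = B * lin_comb (2 * l) Ps a * transpose_mat B" by blast
  obtain c where "clifford.sqnorm Qs c = 1"
    and "lin_comb (2 * l) Ps a = transpose_mat B * lin_comb (2 * l) Qs c * B"
    using focal_leaf_orth_conj[OF Q P orth_mat_transpose[OF B] leaves_orth_image_transpose[OF P B leaves] a]
    by auto
  thus "X \<in> {lin_comb (2 * l) Qs c | c. clifford.sqnorm Qs c = 1}"
    using X orth_conj_cancel[OF B clifford.L_carrier[OF Q]] by auto
qed

lemma leaves_orth_image_imp_span_conj:
  assumes P: "clifford l Ps" and Q: "clifford l Qs" and B: "orth_mat (2 * l) B"
    and leaves: "leaves l Qs = (\<lambda>Lf. (\<lambda>x. B *\<^sub>v x) ` Lf) ` leaves l Ps"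
  shows "mat_span (2 * l) Qs = (\<lambda>X. B * X * transpose_mat B) ` mat_span (2 * l) Ps"
proof -
  interpret P: clifford l Ps by fact
  interpret Q: clifford l Qs by fact
  let ?conj = "\<lambda>X. B * X * transpose_mat B"
  note units = leaves_orth_image_imp_units_conj[OF P Q B leaves]
  have scale: "r \<cdot>\<^sub>m ?conj (P.L a) = ?conj (r \<cdot>\<^sub>m P.L a)" for r a
    using smult_orth_conj[OF orth_mat_carrier[OF B] P.L_carrier] .
  show ?thesis unfolding P.mat_span_eq_scaled_units Q.mat_span_eq_scaled_units
  proof (intro equalityI subsetI)
    fix X assume "X \<in> {r \<cdot>\<^sub>m Q.L c | r c. Q.sqnorm c = 1}"
    then obtain r c where X: "X = r \<cdot>\<^sub>m Q.L c" and c: "Q.sqnorm c = 1" by blast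
    have "Q.L c \<in> ?conj ` {P.L a | a. P.sqnorm a = 1}" unfolding units[symmetric] using c by blast
    then obtain a where a: "P.sqnorm a = 1" and eq: "Q.L c = ?conj (P.L a)" by blast
    have "X = ?conj (r \<cdot>\<^sub>m P.L a)" unfolding X eq scale ..
    moreover have "r \<cdot>\<^sub>m P.L a \<in> {r \<cdot>\<^sub>m P.L a | r a. P.sqnorm a = 1}" using a by blast
    ultimately show "X \<in> ?conj ` {r \<cdot>\<^sub>m P.L a | r a. P.sqnorm a = 1}" by (rule image_eqI)
  next
    fix X assume "X \<in> ?conj ` {r \<cdot>\<^sub>m P.L a | r a. P.sqnorm a = 1}"
    then obtain r a where X: "X = ?conj (r \<cdot>\<^sub>m P.L a)" and a: "P.sqnorm a = 1" by blast
    have "?conj (P.L a) \<in> {Q.L c | c. Q.sqnorm c = 1}" unfolding units using a by blast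
    then obtain c where c: "Q.sqnorm c = 1" and eq: "Q.L c = ?conj (P.L a)" by auto
    have "X = r \<cdot>\<^sub>m Q.L c" unfolding X eq scale ..
    thus "X \<in> {r \<cdot>\<^sub>m Q.L c | r c. Q.sqnorm c = 1}" using c by blast
  qed
qed

theorem proposition4p2:
  fixes l l' :: nat and Ps Qs :: "real mat list"
  assumes "clifford_system l Ps" and "clifford_system l' Qs"
    and "l > cs_m Ps + 1 \<or> (l = cs_m Ps \<and> cs_m Ps \<ge> 2)"
    and "l' > cs_m Qs + 1 \<or> (l' = cs_m Qs \<and> cs_m Qs \<ge> 2)"
    and "\<not> geom_equiv l Ps l' Qs"
  shows "\<not> (\<exists>f. sphere_isometry (2*l) (2*l') f \<and>
               (\<lambda>L. f ` L) ` leaves l Ps = leaves l' Qs)"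
proof
  assume "\<exists>f. sphere_isometry (2*l) (2*l') f \<and> (\<lambda>L. f ` L) ` leaves l Ps = leaves l' Qs"
  then obtain f where f: "sphere_isometry (2*l) (2*l') f"
    and f_leaves: "(\<lambda>L. f ` L) ` leaves l Ps = leaves l' Qs" by blast
  have l': "l' = l" using sphere_isometry_dim_eq[OF f] by simp
  obtain B where B: "orth_mat (2*l) B" and fB: "\<And>x. x \<in> unit_sphere (2*l) \<Longrightarrow> f x = B *\<^sub>v x"
    using sphere_isometry_orth_mat f unfolding l' by blast
  \<comment> \<open>The dimension hypotheses are only needed to exclude the degenerate case \<open>l = 0\<close>.\<close>
  have P: "clifford l Ps" and Q: "clifford l Qs"
    using assms(1-4) l' unfolding clifford_def by auto
  have "leaves l Qs = (\<lambda>L. f ` L) ` leaves l Ps" using f_leaves l' by simp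
  also have "\<dots> = (\<lambda>L. (\<lambda>x. B *\<^sub>v x) ` L) ` leaves l Ps"
    using fB clifford.leaves_subset_unit_sphere[OF P] by (intro image_cong refl) blast
  finally have "mat_span (2*l) Qs = (\<lambda>X. B * X * transpose_mat B) ` mat_span (2*l) Ps"
    using leaves_orth_image_imp_span_conj[OF P Q B] by blast
  hence "geom_equiv l Ps l' Qs"
    using orth_mat_transpose[OF B] unfolding geom_equiv_def l' by auto
  thus False using assms(5) by contradiction
qed

end
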